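(* Let $\mathbb{V}$ be a BIT speciale variety, $A$ a $\mathbb{V}$-algebra and $H$ a subset of $A$ with $0\in H$. Then for every $a\in A$, the equivalence class of $a$ with respect to $\sim_H$ is contained in $\theta(H,\dots,H,a)$.
   Context: BIT speciale: the algebraic theory of $\mathbb{V}$ contains a constant $0$ and, for some $n\ge1$, binary terms $\alpha_1,\dots,\alpha_n$ and an $(n+1)$-ary term $\theta$ such that $\alpha_i(x,x)=0$ ($1\le i\le n$) and $\theta(\alpha_1(x,y),\dots,\alpha_n(x,y),y)=x$ are identities of $\mathbb{V}$. Notation: $\theta(H,\dots,H,a)=\{\theta(h_1,\dots,h_n,a)\mid h_1,\dots,h_n\in H\}$. For $a,b\in A$, $a\sim_H b$ iff $\theta(H,\dots,H,a)=\theta(H,\dots,H,b)$. *)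

theory Defs
  imports Main
begin

text \<open>An algebra of a BIT speciale variety, represented by its carrier A together with
  the interpretations on A of the term operations from the definition:
  the constant zero, the binary terms alpha 1, ..., alpha n, and the (n+1)-ary term theta,
  whose first n arguments are given as a list of length n.\<close>

definition bit_speciale_algebra ::
  "'a set \<Rightarrow> nat \<Rightarrow> 'a \<Rightarrow> (nat \<Rightarrow> 'a \<Rightarrow> 'a \<Rightarrow> 'a) \<Rightarrow> ('a list \<Rightarrow> 'a \<Rightarrow> 'a) \<Rightarrow> bool" where
  "bit_speciale_algebra A n zero alpha theta \<longleftrightarrow>
     n \<ge> 1 \<and>
     zero \<in> A \<and>
     (\<forall>i\<in>{1..n}. \<forall>x\<in>A. \<forall>y\<in>A. alpha i x y \<in> A) \<and>
     (\<forall>hs y. length hs = n \<and> set hs \<subseteq> A \<and> y \<in> A \<longrightarrow> theta hs y \<in> A) \<and>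
     (\<forall>i\<in>{1..n}. \<forall>x\<in>A. alpha i x x = zero) \<and>
     (\<forall>x\<in>A. \<forall>y\<in>A. theta (map (\<lambda>i. alpha i x y) [1..<n+1]) y = x)"

definition theta_set :: "nat \<Rightarrow> ('a list \<Rightarrow> 'a \<Rightarrow> 'a) \<Rightarrow> 'a set \<Rightarrow> 'a \<Rightarrow> 'a set" where
  "theta_set n theta H a = {theta hs a | hs. length hs = n \<and> set hs \<subseteq> H}"

definition sim_H :: "nat \<Rightarrow> ('a list \<Rightarrow> 'a \<Rightarrow> 'a) \<Rightarrow> 'a set \<Rightarrow> 'a \<Rightarrow> 'a \<Rightarrow> bool" where
  "sim_H n theta H a b \<longleftrightarrow> theta_set n theta H a = theta_set n theta H b"

end

theory Submission
  imports Defs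
begin

text \<open>Since \<open>\<alpha>\<^sub>i(b, b) = 0\<close>, the identity \<open>\<theta>(\<alpha>\<^sub>1(b, b), \<dots>, \<alpha>\<^sub>n(b, b), b) = b\<close> says that
  \<open>\<theta>(0, \<dots>, 0, b) = b\<close>; so with \<open>0 \<in> H\<close> every \<open>b\<close> lies in \<open>\<theta>(H, \<dots>, H, b)\<close>, and if
  \<open>a \<sim>\<^sub>H b\<close> this set equals \<open>\<theta>(H, \<dots>, H, a)\<close>.\<close>

lemma bit_speciale_alpha_diag_list:
  assumes "bit_speciale_algebra A n zero alpha theta" and "b \<in> A"
  shows "map (\<lambda>i. alpha i b b) [1..<n+1] = replicate n zero"
proof (rule nth_equalityI)
  fix i assume "i < length (map (\<lambda>i. alpha i b b) [1..<n+1])"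
  then have "i < n" by (simp del: upt_Suc)
  then show "map (\<lambda>i. alpha i b b) [1..<n+1] ! i = replicate n zero ! i"
    using assms by (simp add: bit_speciale_algebra_def del: upt_Suc)
qed simp

lemma bit_speciale_theta_replicate_zero:
  assumes "bit_speciale_algebra A n zero alpha theta" and "b \<in> A"
  shows "theta (replicate n zero) b = b"
proof -
  have "theta (map (\<lambda>i. alpha i b b) [1..<n+1]) b = b"
    using assms unfolding bit_speciale_algebra_def by blast
  then show ?thesis
    using bit_speciale_alpha_diag_list[OF assms] by simp
qed

lemma bit_speciale_mem_theta_set_self:
  assumes "bit_speciale_algebra A n zero alpha theta" and "zero \<in> H" and "b \<in> A"
  shows "b \<in> theta_set n theta H b"
  unfolding theta_set_def
  using assms(2) bit_speciale_theta_replicate_zero[OF assms(1,3)]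
  by (auto intro!: exI[of _ "replicate n zero"])

theorem lemma2p2:
  fixes A H :: "'a set" and n :: nat and zero :: 'a
    and alpha :: "nat \<Rightarrow> 'a \<Rightarrow> 'a \<Rightarrow> 'a" and theta :: "'a list \<Rightarrow> 'a \<Rightarrow> 'a"
  assumes "bit_speciale_algebra A n zero alpha theta"
    and "H \<subseteq> A" and "zero \<in> H"
    and "a \<in> A"
  shows "{b \<in> A. sim_H n theta H a b} \<subseteq> theta_set n theta H a"
proof
  fix b assume "b \<in> {b \<in> A. sim_H n theta H a b}"
  then have "b \<in> A" and "theta_set n theta H a = theta_set n theta H b"
    by (auto simp: sim_H_def)
  with bit_speciale_mem_theta_set_self[OF assms(1,3)]
  show "b \<in> theta_set n theta H a" by simp
qed

end
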